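(* Consider the periodic chain (cycle graph) with sites $1,\dots,N$ (indices mod $N$) and let $S^\dagger_{(2)}=\sum_{i=1}^N s_i^\dagger s_{i+1}^\dagger$. For all positive integers $k,R$ there exists $N_0(k,R)$, independent of $N$, such that for every $N>N_0(k,R)$ the following holds: if $H$ is a $k$-local operator of range at most $R$ on the chain with $H|Q^p\rangle=E_p|Q^p\rangle$ for all $p\in\{0,\dots,L\}$, where $|Q^p\rangle=(S^\dagger_{(2)})^p|\overline 0\rangle$ and $L$ is the largest integer with $|Q^L\rangle\ne0$, then there are constants $\Omega,\omega$ with $E_p=\Omega+\omega p$ for all $p\in\{0,\dots,L\}$. (Equivalently, $S^\dagger_{(2)}$ satisfies properties (P.1), (P.2), (P.3) of Theorem 3 for suitable functions $\alpha,\beta,\gamma$ independent of $N$, with (P.1) holding once $N$ is sufficiently large relative to $R$.)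
   Context: Qubits on sites of the cycle with local basis $|0\rangle,|1\rangle$; $s_i^\dagger$ acts on site $i$ as $s^\dagger|0\rangle=|1\rangle$, $s^\dagger|1\rangle=0$, $s_i=(s_i^\dagger)^\dagger$; $|\overline 0\rangle=|0\rangle^{\otimes N}$. Distance is graph distance on the cycle. Every operator has a unique expansion in normal-ordered strings $s^\dagger_{j_1}\cdots s^\dagger_{j_n}s_{k_1}\cdots s_{k_m}$ (the $j$'s pairwise distinct, the $k$'s pairwise distinct); a string has range $R$ where $R$ is the smallest positive integer with all pairwise distances between its sites $<R$; an operator has range at most $R$ if all its strings with nonzero coefficient do, and is $k$-local if each such string involves at most $k$ sites. Operators need not be Hermitian. *)

theory Defs
  imports Complex_Main
begin

text \<open>Sites of the cycle are 0..N-1 (indices mod N). A basis state of the N-qubit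
chain is identified with the set of sites in state |1>; a state vector is a function
from such sets to complex amplitudes (supported on subsets of {0..<N}).\<close>

type_synonym state = "nat set \<Rightarrow> complex"

definition cdist :: "nat \<Rightarrow> nat \<Rightarrow> nat \<Rightarrow> nat" where
  "cdist N i j = min (nat \<bar>int i - int j\<bar>) (N - nat \<bar>int i - int j\<bar>)"

definition sdag :: "nat \<Rightarrow> state \<Rightarrow> state" where
  "sdag i v = (\<lambda>T. if i \<in> T then v (T - {i}) else 0)"

text \<open>Normal-ordered string s^dagger_J s_K (J, K sets of sites) acting on a state:
  s^dagger_J s_K |S> = |(S - K) \<union> J> if K \<subseteq> S and J \<inter> (S - K) = {}, else 0.\<close>
definition apply_string :: "nat set \<Rightarrow> nat set \<Rightarrow> state \<Rightarrow> state" where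
  "apply_string J K v = (\<lambda>T. if J \<subseteq> T \<and> K \<inter> (T - J) = {} then v ((T - J) \<union> K) else 0)"

text \<open>An operator on the chain, given by its (unique) normal-ordered expansion
  with coefficients c J K.\<close>
definition op_of :: "nat \<Rightarrow> (nat set \<Rightarrow> nat set \<Rightarrow> complex) \<Rightarrow> state \<Rightarrow> state" where
  "op_of N c v = (\<lambda>T. \<Sum>J\<in>Pow {0..<N}. \<Sum>K\<in>Pow {0..<N}. c J K * apply_string J K v T)"

definition local_range :: "nat \<Rightarrow> nat \<Rightarrow> nat \<Rightarrow> (nat set \<Rightarrow> nat set \<Rightarrow> complex) \<Rightarrow> bool" where
  "local_range N k R c \<longleftrightarrow>
     (\<forall>J K. J \<subseteq> {0..<N} \<longrightarrow> K \<subseteq> {0..<N} \<longrightarrow> c J K \<noteq> 0 \<longrightarrow>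
        card (J \<union> K) \<le> k \<and> (\<forall>i\<in>J \<union> K. \<forall>j\<in>J \<union> K. cdist N i j < R))"

definition S2 :: "nat \<Rightarrow> state \<Rightarrow> state" where
  "S2 N v = (\<lambda>T. \<Sum>i<N. sdag i (sdag ((i + 1) mod N) v) T)"

definition vac :: state where
  "vac = (\<lambda>S. if S = {} then 1 else 0)"

definition Qst :: "nat \<Rightarrow> nat \<Rightarrow> state" where
  "Qst N p = (S2 N ^^ p) vac"

definition Lmax :: "nat \<Rightarrow> nat" where
  "Lmax N = (GREATEST p. Qst N p \<noteq> (\<lambda>_. 0))"

end

theory Submission
  imports Defs
begin

(* For |T| = 2p, Q^p(T) = p! D(T), where D(T) counts the coverings of T by dimers on cyclically
   adjacent sites, and Q^p(T) = 0 for all other T; D(T) is the trace of a product of 2 x 2 transfer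
   matrices, one per site.  The eigenvalue equations therefore read
   sum_(J,K) c(J,K) D((T - J) u K) = E_p D(T) for all 2p-element sets T.

   Fix an interval [a, b) and the window [a - R, b + R) around it.  Strings missing [a, b) see a
   configuration only through the transfer matrix of [a, b) and the sites outside [a, b); strings
   meeting [a, b) lie inside the window and see the outside only through the product of its
   transfer matrices (the outer product).  So if two configurations agree outside [a, b), have the
   same transfer matrix on it and differ by one dimer, then E_(p+1) - E_p times their common count
   is a linear function of the outer product alone.  Putting the extra dimer into an empty stretch
   gives one and the same increment for all p up to about N/2 - R.  For the remaining, nearly full
   configurations the outer product is 1 = proj0 + proj1, and both summands are outer products of
   sparse configurations with the same window, whose increments are already known.  So all
   increments agree and E_p is linear in p. *)

section \<open>Two by two matrices and transfer matrices\<close>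

datatype mat2 = Mat2 (m00: complex) (m01: complex) (m10: complex) (m11: complex)

lemma mat2_eqI:
  "m00 A = m00 B \<Longrightarrow> m01 A = m01 B \<Longrightarrow> m10 A = m10 B \<Longrightarrow> m11 A = m11 B \<Longrightarrow> A = B"
  by (cases A; cases B) auto

instantiation mat2 :: ring_1
begin
definition "0 = Mat2 0 0 0 0"
definition "1 = Mat2 1 0 0 1"
definition "A + B = Mat2 (m00 A + m00 B) (m01 A + m01 B) (m10 A + m10 B) (m11 A + m11 B)"
definition "A - B = Mat2 (m00 A - m00 B) (m01 A - m01 B) (m10 A - m10 B) (m11 A - m11 B)"
definition "- A = Mat2 (- m00 A) (- m01 A) (- m10 A) (- m11 A)"
definition "A * B = Mat2 (m00 A * m00 B + m01 A * m10 B) (m00 A * m01 B + m01 A * m11 B)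
                        (m10 A * m00 B + m11 A * m10 B) (m10 A * m01 B + m11 A * m11 B)"
instance
  by standard (auto intro!: mat2_eqI simp: zero_mat2_def one_mat2_def plus_mat2_def
      minus_mat2_def uminus_mat2_def times_mat2_def algebra_simps)
end

lemma mat2_sel_simps [simp]:
  "m00 0 = 0" "m01 0 = 0" "m10 0 = 0" "m11 0 = 0"
  "m00 1 = 1" "m01 1 = 0" "m10 1 = 0" "m11 1 = 1"
  "m00 (A + B) = m00 A + m00 B" "m01 (A + B) = m01 A + m01 B"
  "m10 (A + B) = m10 A + m10 B" "m11 (A + B) = m11 A + m11 B"
  "m00 (A * B) = m00 A * m00 B + m01 A * m10 B" "m01 (A * B) = m00 A * m01 B + m01 A * m11 B"
  "m10 (A * B) = m10 A * m00 B + m11 A * m10 B" "m11 (A * B) = m10 A * m01 B + m11 A * m11 B"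
  by (simp_all add: zero_mat2_def one_mat2_def plus_mat2_def times_mat2_def)

definition trace :: "mat2 \<Rightarrow> complex" where
  "trace A = m00 A + m11 A"

lemma trace_add: "trace (A + B) = trace A + trace B"
  by (simp add: trace_def)

lemma trace_mult_commute: "trace (A * B) = trace (B * A)"
  by (simp add: trace_def algebra_simps)

definition sigma_x :: mat2 where "sigma_x = Mat2 0 1 1 0"
definition proj0 :: mat2 where "proj0 = Mat2 1 0 0 0"
definition proj1 :: mat2 where "proj1 = Mat2 0 0 0 1"

lemmas mat2_defs = sigma_x_def proj0_def proj1_def

lemma sigma_x_squared [simp]: "sigma_x * sigma_x = 1"
  and proj0_squared [simp]: "proj0 * proj0 = proj0"
  and proj0_proj1 [simp]: "proj0 * proj1 = 0"
  and proj1_proj0 [simp]: "proj1 * proj0 = 0"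
  and proj0_plus_proj1: "proj0 + proj1 = 1"
  and sigma_x_conj_proj0: "sigma_x * proj0 * sigma_x = proj1"
  and sigma_x_conj_proj1: "sigma_x * proj1 * sigma_x = proj0"
  and sigma_x_proj0_proj0_sigma_x: "sigma_x * proj0 * (proj0 * sigma_x) = proj1"
  and proj1_sigma_x_anticommutator: "proj1 * sigma_x + sigma_x * proj1 = sigma_x"
  by (rule mat2_eqI; simp add: mat2_defs)+

lemma trace_simps [simp]:
  "trace 0 = 0" "trace 1 = 2" "trace proj0 = 1" "trace proj1 = 1"
  by (simp_all add: trace_def mat2_defs)

lemma sigma_x_power: "sigma_x ^ n = (if even n then 1 else sigma_x)"
  by (induction n) auto

lemma trace_proj0_sandwich: "trace (proj0 * A * proj0 * B) = m00 A * trace (proj0 * B)"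
  by (simp add: trace_def proj0_def algebra_simps)

text \<open>Transfer matrices for dimer coverings on the cycle: the state of a bond records whether
  a dimer crosses it; an occupied site flips it, an empty site requires it to be uncrossed.\<close>

definition transfer :: "bool \<Rightarrow> mat2" where
  "transfer occupied = (if occupied then sigma_x else proj0)"

definition transfer_prod :: "nat set \<Rightarrow> nat \<Rightarrow> nat \<Rightarrow> mat2" where
  "transfer_prod S a b = prod_list (map (\<lambda>i. transfer (i \<in> S)) [a..<b])"

lemma transfer_prod_empty [simp]: "transfer_prod S a a = 1"
  by (simp add: transfer_prod_def)

lemma transfer_prod_single: "transfer_prod S a (Suc a) = transfer (a \<in> S)"
  by (simp add: transfer_prod_def)

lemma transfer_prod_split:
  "a \<le> b \<Longrightarrow> b \<le> c \<Longrightarrow> transfer_prod S a c = transfer_prod S a b * transfer_prod S b c"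
  unfolding transfer_prod_def by (metis le_add_diff_inverse map_append prod_list.append upt_add_eq_append)

lemma transfer_prod_Suc: "a \<le> b \<Longrightarrow> transfer_prod S a (Suc b) = transfer_prod S a b * transfer (b \<in> S)"
  by (simp add: transfer_prod_def)

lemma transfer_prod_Suc_left: "a < b \<Longrightarrow> transfer_prod S a b = transfer (a \<in> S) * transfer_prod S (Suc a) b"
  by (simp add: transfer_prod_def upt_conv_Cons)

lemma transfer_prod_cong:
  "(\<And>i. a \<le> i \<Longrightarrow> i < b \<Longrightarrow> i \<in> S \<longleftrightarrow> i \<in> S') \<Longrightarrow> transfer_prod S a b = transfer_prod S' a b"
  unfolding transfer_prod_def by (intro arg_cong[where f = prod_list] map_cong) auto

lemma transfer_prod_occupied:
  "{a..<b} \<subseteq> S \<Longrightarrow> transfer_prod S a b = sigma_x ^ (b - a)"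
proof (induction b)
  case (Suc b)
  show ?case
  proof (cases "a \<le> b")
    case True
    with Suc show ?thesis
      by (simp add: transfer_prod_Suc transfer_def Suc_diff_le subset_iff power_commutes)
  qed (simp add: transfer_prod_def)
qed (simp add: transfer_prod_def)

lemma transfer_prod_vacant:
  "S \<inter> {a..<b} = {} \<Longrightarrow> transfer_prod S a b = (if a < b then proj0 else 1)"
proof (induction b)
  case (Suc b)
  have "b \<notin> S \<or> \<not> a \<le> b" and "S \<inter> {a..<b} = {}"
    using Suc.prems by auto
  with Suc.IH show ?case
    by (cases "a \<le> b") (auto simp: transfer_prod_Suc transfer_def transfer_prod_def)
qed (simp add: transfer_prod_def)

lemma transfer_prod_gap:
  assumes S: "S \<inter> {a..<b} = {a..<b} - {u..<v}" and "a \<le> u" "u < v" "v \<le> b"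
  shows "transfer_prod S a b = sigma_x ^ (u - a) * proj0 * sigma_x ^ (b - v)"
proof -
  have mem: "i \<in> S \<longleftrightarrow> \<not> (u \<le> i \<and> i < v)" if "a \<le> i" "i < b" for i
  proof -
    have "i \<in> S \<longleftrightarrow> i \<in> S \<inter> {a..<b}"
      using that by simp
    then show ?thesis
      using that by (simp add: S)
  qed
  have vacant: "S \<inter> {u..<v} = {}"
  proof (rule equals0I)
    fix i
    assume "i \<in> S \<inter> {u..<v}"
    then show False
      using mem[of i] assms(2-4) by auto
  qed
  have "transfer_prod S a b = transfer_prod S a u * transfer_prod S u v * transfer_prod S v b"
    using assms(2-4) by (simp add: transfer_prod_split[of a u b] transfer_prod_split[of u v b] mult.assoc)
  moreover have "transfer_prod S a u = sigma_x ^ (u - a)" "transfer_prod S v b = sigma_x ^ (b - v)"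
    using assms(2-4) by (intro transfer_prod_occupied; auto simp: mem)+
  moreover have "transfer_prod S u v = proj0"
    using vacant \<open>u < v\<close> by (simp add: transfer_prod_vacant)
  ultimately show ?thesis
    by simp
qed

section \<open>Dimer coverings and the states \<open>Q\<^sup>p\<close>\<close>

definition next_site :: "nat \<Rightarrow> nat \<Rightarrow> nat" where
  "next_site N i = (i + 1) mod N"

lemma next_site_less: "0 < N \<Longrightarrow> next_site N i < N"
  by (simp add: next_site_def)

lemma next_site_neq:
  assumes "2 \<le> N" "i < N"
  shows "next_site N i \<noteq> i"
  using assms by (cases "Suc i = N") (simp_all add: next_site_def)

lemma sum_next_site: "0 < N \<Longrightarrow> (\<Sum>i<N. f (next_site N i)) = (\<Sum>i<N. f i)"
proof -
  assume "0 < N"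
  then obtain M where N: "N = Suc M"
    using gr0_implies_Suc by blast
  have "(\<Sum>i<N. f (next_site N i)) = (\<Sum>i<M. f (Suc i)) + f 0"
    by (simp add: N next_site_def)
  also have "\<dots> = (\<Sum>i<N. f i)"
    unfolding N sum.lessThan_Suc_shift by (simp add: add.commute)
  finally show ?thesis .
qed

text \<open>The trace counts the dimer coverings of \<open>S\<close> by pairs of cyclically adjacent sites.\<close>

definition dimer_count :: "nat \<Rightarrow> nat set \<Rightarrow> complex" where
  "dimer_count N S = trace (transfer_prod S 0 N)"

text \<open>Coverings of \<open>T\<close> in which a dimer occupies the bond between sites \<open>j - 1\<close> and \<open>j\<close>.\<close>

definition crossing :: "nat \<Rightarrow> nat set \<Rightarrow> nat \<Rightarrow> complex" where
  "crossing N T j = trace (transfer_prod T 0 j * proj1 * transfer_prod T j N)"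

lemma trace_proj1_proj0:
  "trace (A * proj1 * (proj0 * B)) = 0" "trace (A * proj0 * (proj1 * B)) = 0"
  by (simp_all add: mult.assoc flip: mult.assoc[of proj1 proj0] mult.assoc[of proj0 proj1])

lemma crossing_vacant:
  assumes "j < N" "j \<notin> T"
  shows "crossing N T j = 0"
  using assms by (simp add: crossing_def transfer_prod_Suc_left transfer_def trace_proj1_proj0)

lemma crossing_vacant_next:
  assumes "j < N" "j \<notin> T"
  shows "crossing N T (next_site N j) = 0"
proof (cases "Suc j < N")
  case True
  then show ?thesis
    using assms by (simp add: crossing_def next_site_def transfer_prod_Suc transfer_def
        mult.assoc trace_proj1_proj0 flip: mult.assoc[of _ proj0])
next
  case False
  with assms have "N = Suc j"
    by simp
  then have "next_site N j = 0"
    by (simp add: next_site_def)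
  with \<open>N = Suc j\<close> assms have "crossing N T (next_site N j) = trace (proj1 * (transfer_prod T 0 j * proj0))"
    by (simp add: crossing_def transfer_prod_Suc transfer_def)
  also have "\<dots> = trace (transfer_prod T 0 j * (proj0 * proj1))"
    by (simp only: trace_mult_commute[of proj1] mult.assoc)
  finally show ?thesis
    by simp
qed

text \<open>An occupied site is the end of exactly one dimer, on its left or on its right.\<close>

lemma crossing_occupied:
  assumes "j < N" "j \<in> T"
  shows "crossing N T j + crossing N T (next_site N j) = dimer_count N T"
proof -
  define L where "L = transfer_prod T 0 j"
  define R where "R = transfer_prod T (Suc j) N"
  have count: "transfer_prod T 0 N = L * sigma_x * R"
    using assms by (simp add: L_def R_def transfer_prod_split[of 0 j N] transfer_prod_Suc_left[of j N]
        transfer_def mult.assoc)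
  have left: "crossing N T j = trace (L * (proj1 * sigma_x) * R)"
    using assms by (simp add: crossing_def L_def R_def transfer_prod_Suc_left[of j N] transfer_def mult.assoc)
  have right: "crossing N T (next_site N j) = trace (L * (sigma_x * proj1) * R)"
  proof (cases "Suc j < N")
    case True
    then show ?thesis
      using assms by (simp add: next_site_def crossing_def L_def R_def transfer_prod_Suc[of 0 j]
          transfer_def mult.assoc)
  next
    case False
    with assms have "N = Suc j"
      by simp
    then have "R = 1" "crossing N T (next_site N j) = trace (proj1 * (L * sigma_x))"
      using assms by (simp_all add: R_def next_site_def crossing_def L_def transfer_prod_Suc[of 0 j]
          transfer_def)
    then show ?thesis
      by (simp add: trace_mult_commute[of proj1] mult.assoc)
  qed
  have "crossing N T j + crossing N T (next_site N j) = trace (L * (proj1 * sigma_x + sigma_x * proj1) * R)"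
    by (simp add: left right distrib_left distrib_right trace_add)
  then show ?thesis
    by (simp add: proj1_sigma_x_anticommutator dimer_count_def count)
qed

lemma dimer_count_remove_inner_dimer:
  assumes "Suc i < N" "i \<in> T" "Suc i \<in> T"
  shows "dimer_count N (T - {i, Suc i}) = crossing N T (Suc i)"
proof -
  let ?T = "T - {i, Suc i}" and ?L = "transfer_prod T 0 i" and ?R = "transfer_prod T (Suc (Suc i)) N"
  have "transfer_prod ?T 0 N
      = transfer_prod ?T 0 i * transfer_prod ?T i (Suc (Suc i)) * transfer_prod ?T (Suc (Suc i)) N"
    using assms(1) transfer_prod_split[of 0 i N ?T] transfer_prod_split[of i "Suc (Suc i)" N ?T]
    by (simp add: mult.assoc)
  also have "\<dots> = ?L * proj0 * ?R"
  proof -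
    have "?T \<inter> {i..<Suc (Suc i)} = {}"
      by auto
    moreover have "transfer_prod ?T 0 i = ?L" "transfer_prod ?T (Suc (Suc i)) N = ?R"
      by (auto intro: transfer_prod_cong)
    ultimately show ?thesis
      by (simp add: transfer_prod_vacant)
  qed
  also have "\<dots> = ?L * (sigma_x * proj1 * sigma_x) * ?R"
    by (simp add: sigma_x_conj_proj1)
  finally show ?thesis
    using assms by (simp add: dimer_count_def crossing_def transfer_prod_Suc[of 0 i]
        transfer_prod_Suc_left[of "Suc i" N] transfer_def mult.assoc)
qed

lemma dimer_count_remove_wrapping_dimer:
  assumes "N = Suc i" "1 \<le> i" "i \<in> T" "0 \<in> T"
  shows "dimer_count N (T - {i, 0}) = crossing N T 0"
proof -
  define M where "M = transfer_prod T 1 i"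
  have split: "transfer_prod S 0 N = transfer_prod S 0 1 * transfer_prod S 1 i * transfer_prod S i N" for S
    using transfer_prod_split[of 0 1 N S] transfer_prod_split[of 1 i N S] assms(1,2)
    by (simp add: mult.assoc)
  have "transfer_prod (T - {i, 0}) 1 i = M"
    unfolding M_def by (rule transfer_prod_cong) auto
  then have "transfer_prod (T - {i, 0}) 0 N = proj0 * M * proj0"
    unfolding split using assms(1) by (simp add: transfer_prod_single transfer_def)
  then have "dimer_count N (T - {i, 0}) = trace (proj0 * M)"
    by (simp add: dimer_count_def trace_def proj0_def)
  moreover have "transfer_prod T 0 N = sigma_x * M * sigma_x"
    unfolding split M_def using assms by (simp add: transfer_prod_single transfer_def)
  then have "crossing N T 0 = trace (sigma_x * proj1 * sigma_x * M)"
    using trace_mult_commute[of "proj1 * sigma_x * M" sigma_x] by (simp add: crossing_def mult.assoc)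
  ultimately show ?thesis
    by (simp add: sigma_x_conj_proj1)
qed

lemma dimer_count_remove_dimer:
  assumes "2 \<le> N" "i < N" "i \<in> T" "next_site N i \<in> T"
  shows "dimer_count N (T - {i, next_site N i}) = crossing N T (next_site N i)"
proof (cases "Suc i < N")
  case True
  then have "next_site N i = Suc i"
    by (simp add: next_site_def)
  with True assms(3,4) show ?thesis
    by (simp add: dimer_count_remove_inner_dimer)
next
  case False
  with assms(2) have "N = Suc i"
    by simp
  then have "next_site N i = 0"
    by (simp add: next_site_def)
  with \<open>N = Suc i\<close> assms show ?thesis
    by (simp add: dimer_count_remove_wrapping_dimer)
qed

lemma sum_crossing:
  assumes "2 \<le> N" "T \<subseteq> {..<N}"
  shows "2 * (\<Sum>j<N. crossing N T j) = of_nat (card T) * dimer_count N T"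
proof -
  have "2 * (\<Sum>j<N. crossing N T j) = (\<Sum>j<N. crossing N T j + crossing N T (next_site N j))"
    using assms by (simp add: sum.distrib sum_next_site)
  also have "\<dots> = (\<Sum>j<N. if j \<in> T then dimer_count N T else 0)"
    by (rule sum.cong) (auto simp: crossing_occupied crossing_vacant crossing_vacant_next)
  also have "\<dots> = of_nat (card T) * dimer_count N T"
    using assms by (simp add: sum.If_cases Int_absorb1)
  finally show ?thesis .
qed

text \<open>Every covering of \<open>T\<close> consists of \<open>card T / 2\<close> dimers.\<close>

lemma sum_dimer_count_remove_dimer:
  assumes "2 \<le> N" "T \<subseteq> {..<N}" "card T = 2 * q"
  shows "(\<Sum>i<N. if i \<in> T \<and> next_site N i \<in> T then dimer_count N (T - {i, next_site N i}) else 0)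
    = of_nat q * dimer_count N T"
proof -
  have "2 * (\<Sum>j<N. crossing N T j) = 2 * (of_nat q * dimer_count N T)"
    using sum_crossing[OF assms(1,2)] assms(3) by (simp add: mult.assoc)
  then have crossings: "(\<Sum>j<N. crossing N T j) = of_nat q * dimer_count N T"
    by simp
  have "(\<Sum>i<N. if i \<in> T \<and> next_site N i \<in> T then dimer_count N (T - {i, next_site N i}) else 0)
      = (\<Sum>i<N. crossing N T (next_site N i))"
    using assms(1)
    by (intro sum.cong)
      (auto simp: dimer_count_remove_dimer crossing_vacant crossing_vacant_next next_site_less)
  also have "\<dots> = (\<Sum>j<N. crossing N T j)"
    using assms(1) by (simp add: sum_next_site)
  finally show ?thesis
    unfolding crossings .
qed

lemma dimer_count_block:
  assumes "s + 2 * p \<le> N"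
  shows "dimer_count N {s..<s + 2 * p} \<noteq> 0"
proof -
  let ?B = "{s..<s + 2 * p}"
  have "transfer_prod ?B 0 N
      = transfer_prod ?B 0 s * transfer_prod ?B s (s + 2 * p) * transfer_prod ?B (s + 2 * p) N"
    using assms transfer_prod_split[of 0 s N ?B] transfer_prod_split[of s "s + 2 * p" N ?B]
    by (simp add: mult.assoc)
  also have "\<dots> = (if 0 < s then proj0 else 1) * (if s + 2 * p < N then proj0 else 1)"
    by (simp add: transfer_prod_vacant transfer_prod_occupied sigma_x_power)
  finally show ?thesis
    by (simp add: dimer_count_def)
qed

lemma Qst_Suc:
  assumes "2 \<le> N"
  shows "Qst N (Suc p) T
    = (\<Sum>i<N. if i \<in> T \<and> next_site N i \<in> T then Qst N p (T - {i, next_site N i}) else 0)"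
proof -
  have diff: "T - {i} - {j} = T - {i, j}" for i j
    by auto
  have "Qst N (Suc p) T = S2 N (Qst N p) T"
    by (simp add: Qst_def)
  also have "\<dots> = (\<Sum>i<N. if i \<in> T \<and> next_site N i \<in> T then Qst N p (T - {i, next_site N i}) else 0)"
    unfolding S2_def sdag_def using next_site_neq[OF assms]
    by (intro sum.cong refl) (auto simp: diff next_site_def)
  finally show ?thesis .
qed

lemma remove_dimer_subset_card_iff:
  assumes "2 \<le> N" "i < N" "i \<in> T" "next_site N i \<in> T"
  shows "T - {i, next_site N i} \<subseteq> {..<N} \<and> card (T - {i, next_site N i}) = 2 * p
    \<longleftrightarrow> T \<subseteq> {..<N} \<and> card T = 2 * Suc p"
proof -
  have "next_site N i \<noteq> i" "next_site N i < N"
    using assms by (simp_all add: next_site_neq next_site_less)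
  then have "T - {i, next_site N i} \<subseteq> {..<N} \<longleftrightarrow> T \<subseteq> {..<N}"
    using assms by auto
  moreover have "card (T - {i, next_site N i}) = 2 * p \<longleftrightarrow> card T = 2 * Suc p" if "T \<subseteq> {..<N}"
  proof -
    have "finite T"
      using that by (simp add: rev_finite_subset[OF finite_lessThan])
    moreover have "card {i, next_site N i} = 2"
      using \<open>next_site N i \<noteq> i\<close> by simp
    moreover have "card {i, next_site N i} \<le> card T"
      using \<open>finite T\<close> assms(3,4) by (intro card_mono) auto
    ultimately show ?thesis
      using assms(3,4) by (simp add: card_Diff_subset) arith
  qed
  ultimately show ?thesis
    by blast
qed

lemma Qst_eq:
  assumes "2 \<le> N"
  shows "Qst N p T = (if T \<subseteq> {..<N} \<and> card T = 2 * p then fact p * dimer_count N T else 0)"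
proof (induction p arbitrary: T)
  case 0
  have "T \<subseteq> {..<N} \<and> card T = 0 \<longleftrightarrow> T = {}"
    using finite_subset[of T "{..<N}"] by auto
  then show ?case
    using assms by (simp add: Qst_def vac_def dimer_count_def transfer_prod_vacant)
next
  case (Suc p)
  let ?rest = "\<lambda>i. T - {i, next_site N i}"
  let ?pair = "\<lambda>i. i \<in> T \<and> next_site N i \<in> T"
  show ?case
  proof (cases "T \<subseteq> {..<N} \<and> card T = 2 * Suc p")
    case True
    then have "Qst N (Suc p) T = (\<Sum>i<N. fact p * (if ?pair i then dimer_count N (?rest i) else 0))"
      unfolding Qst_Suc[OF assms] using remove_dimer_subset_card_iff[OF assms]
      by (intro sum.cong refl) (simp add: Suc.IH)
    also have "\<dots> = fact p * (\<Sum>i<N. if ?pair i then dimer_count N (?rest i) else 0)"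
      by (simp add: sum_distrib_left)
    also have "(\<Sum>i<N. if ?pair i then dimer_count N (?rest i) else 0) = of_nat (Suc p) * dimer_count N T"
      using True by (intro sum_dimer_count_remove_dimer[OF assms]) auto
    finally show ?thesis
      using True by (simp add: algebra_simps)
  next
    case False
    have "Qst N p (?rest i) = 0" if "i < N" "?pair i" for i
    proof -
      have "\<not> (?rest i \<subseteq> {..<N} \<and> card (?rest i) = 2 * p)"
        using remove_dimer_subset_card_iff[OF assms, of i T p] that False by blast
      then show ?thesis
        unfolding Suc.IH by (rule if_not_P)
    qed
    then have "Qst N (Suc p) T = 0"
      unfolding Qst_Suc[OF assms] by (intro sum.neutral) auto
    then show ?thesis
      by (simp only: if_not_P[OF False])
  qed
qed

lemma Qst_nonzero_iff:
  assumes "2 \<le> N"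
  shows "Qst N p \<noteq> (\<lambda>_. 0) \<longleftrightarrow> 2 * p \<le> N"
proof
  assume "Qst N p \<noteq> (\<lambda>_. 0)"
  then obtain T where "Qst N p T \<noteq> 0"
    by auto
  moreover have "Qst N p T = 0" if "\<not> (T \<subseteq> {..<N} \<and> card T = 2 * p)"
    unfolding Qst_eq[OF assms] using that by (rule if_not_P)
  ultimately have "T \<subseteq> {..<N}" "card T = 2 * p"
    by blast+
  then show "2 * p \<le> N"
    using card_mono[of "{..<N}" T] by simp
next
  assume "2 * p \<le> N"
  then have "Qst N p {0..<2 * p} = fact p * dimer_count N {0..<2 * p}"
    by (auto simp: Qst_eq[OF assms])
  then have "Qst N p {0..<2 * p} \<noteq> 0"
    using dimer_count_block[of 0 p N] \<open>2 * p \<le> N\<close> by simp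
  then show "Qst N p \<noteq> (\<lambda>_. 0)"
    by auto
qed

lemma Lmax_eq:
  assumes "2 \<le> N"
  shows "Lmax N = N div 2"
  unfolding Lmax_def
proof (rule Greatest_equality)
  show "Qst N (N div 2) \<noteq> (\<lambda>_. 0)"
    unfolding Qst_nonzero_iff[OF assms] by simp
  show "p \<le> N div 2" if "Qst N p \<noteq> (\<lambda>_. 0)" for p
    using that unfolding Qst_nonzero_iff[OF assms] by simp
qed

text \<open>A number-conserving string \<open>s\<^sup>\<dagger>\<^sub>J s\<^sub>K\<close> that maps \<open>|(T - J) \<union> K\<rangle>\<close> to \<open>|T\<rangle>\<close>.\<close>

definition admissible :: "nat set \<Rightarrow> nat set \<Rightarrow> nat set \<Rightarrow> bool" where
  "admissible T J K \<longleftrightarrow> J \<subseteq> T \<and> K \<inter> (T - J) = {} \<and> card J = card K"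

definition reduced_action :: "nat \<Rightarrow> (nat set \<Rightarrow> nat set \<Rightarrow> complex) \<Rightarrow> nat set \<Rightarrow> complex" where
  "reduced_action N c T = (\<Sum>J\<in>Pow {..<N}. \<Sum>K\<in>Pow {..<N}.
     if admissible T J K then c J K * dimer_count N ((T - J) \<union> K) else 0)"

lemma op_of_Qst:
  assumes "2 \<le> N" "T \<subseteq> {..<N}" "card T = 2 * p"
  shows "op_of N c (Qst N p) T = fact p * reduced_action N c T"
proof -
  have "op_of N c (Qst N p) T = (\<Sum>J\<in>Pow {..<N}. \<Sum>K\<in>Pow {..<N}. c J K * apply_string J K (Qst N p) T)"
    by (simp add: op_of_def atLeast0LessThan)
  also have "\<dots> = (\<Sum>J\<in>Pow {..<N}. \<Sum>K\<in>Pow {..<N}.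
      fact p * (if admissible T J K then c J K * dimer_count N ((T - J) \<union> K) else 0))"
  proof (intro sum.cong refl)
    fix J K
    assume "J \<in> Pow {..<N}" "K \<in> Pow {..<N}"
    then have JK: "J \<subseteq> {..<N}" "K \<subseteq> {..<N}"
      by auto
    show "c J K * apply_string J K (Qst N p) T
      = fact p * (if admissible T J K then c J K * dimer_count N ((T - J) \<union> K) else 0)"
    proof (cases "J \<subseteq> T \<and> K \<inter> (T - J) = {}")
      case True
      have fin: "finite T" "finite J" "finite K"
        using assms(2) JK by (simp_all add: rev_finite_subset[OF finite_lessThan])
      with True have "card ((T - J) \<union> K) = card (T - J) + card K"
        by (subst card_Un_disjoint) (auto simp: Int_commute)
      moreover have "card (T - J) = card T - card J" "card J \<le> card T"
        using True fin by (simp_all add: card_Diff_subset card_mono)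
      ultimately have "card ((T - J) \<union> K) = 2 * p \<longleftrightarrow> card J = card K"
        using assms(3) by auto
      moreover have "(T - J) \<union> K \<subseteq> {..<N}"
        using assms(2) JK(2) by auto
      ultimately show ?thesis
        using True assms(1) by (simp add: apply_string_def Qst_eq admissible_def)
    next
      case False
      then show ?thesis
        by (auto simp: apply_string_def admissible_def)
    qed
  qed
  also have "\<dots> = fact p * reduced_action N c T"
    by (simp add: reduced_action_def sum_distrib_left)
  finally show ?thesis .
qed

definition reduced_eigen :: "nat \<Rightarrow> (nat set \<Rightarrow> nat set \<Rightarrow> complex) \<Rightarrow> (nat \<Rightarrow> complex) \<Rightarrow> bool" where
  "reduced_eigen N c E \<longleftrightarrow>
     (\<forall>p T. T \<subseteq> {..<N} \<longrightarrow> card T = 2 * p \<longrightarrow> reduced_action N c T = E p * dimer_count N T)"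

lemma reduced_eigenD:
  "reduced_eigen N c E \<Longrightarrow> T \<subseteq> {..<N} \<Longrightarrow> card T = 2 * p \<Longrightarrow> reduced_action N c T = E p * dimer_count N T"
  by (simp add: reduced_eigen_def)

lemma reduced_eigenI:
  assumes "2 \<le> N" and eigen: "\<forall>p \<le> Lmax N. op_of N c (Qst N p) = (\<lambda>T. E p * Qst N p T)"
  shows "reduced_eigen N c E"
  unfolding reduced_eigen_def
proof (intro allI impI)
  fix p T
  assume T: "T \<subseteq> {..<N}" "card T = 2 * p"
  then have "p \<le> Lmax N"
    using card_mono[of "{..<N}" T] assms(1) by (simp add: Lmax_eq)
  with eigen have "op_of N c (Qst N p) T = E p * Qst N p T"
    by simp
  then have "fact p * reduced_action N c T = fact p * (E p * dimer_count N T)"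
    using op_of_Qst[OF assms(1) T] T by (simp add: Qst_eq[OF assms(1)])
  then show "reduced_action N c T = E p * dimer_count N T"
    by simp
qed

section \<open>Splitting the action at a window\<close>

definition outer_prod :: "nat \<Rightarrow> nat set \<Rightarrow> nat \<Rightarrow> nat \<Rightarrow> mat2" where
  "outer_prod N S lo hi = transfer_prod S hi N * transfer_prod S 0 lo"

lemma dimer_count_split:
  assumes "lo \<le> hi" "hi \<le> N"
  shows "dimer_count N S = trace (transfer_prod S lo hi * outer_prod N S lo hi)"
  using assms transfer_prod_split[of 0 lo N S] transfer_prod_split[of lo hi N S]
    trace_mult_commute[of "transfer_prod S 0 lo" "transfer_prod S lo hi * transfer_prod S hi N"]
  by (simp add: dimer_count_def outer_prod_def mult.assoc)

lemma outer_prod_cong: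
  assumes "\<And>i. i < lo \<or> hi \<le> i \<and> i < N \<Longrightarrow> i \<in> S \<longleftrightarrow> i \<in> S'"
  shows "outer_prod N S lo hi = outer_prod N S' lo hi"
  unfolding outer_prod_def using assms by (metis transfer_prod_cong zero_le)

lemma outer_prod_eq:
  "S - {a..<b} = S' - {a..<b} \<Longrightarrow> outer_prod N S a b = outer_prod N S' a b"
  by (intro outer_prod_cong) (metis Diff_iff atLeastLessThan_iff linorder_not_le)

lemma transfer_prod_Un_disjoint:
  "Out \<inter> {a..<b} = {} \<Longrightarrow> transfer_prod (S \<union> Out) a b = transfer_prod S a b"
  by (intro transfer_prod_cong) auto

lemma dimer_count_window:
  assumes "C \<subseteq> {lo..<hi}" "Out \<inter> {lo..<hi} = {}" "lo \<le> hi" "hi \<le> N"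
  shows "dimer_count N (C \<union> Out) = trace (transfer_prod C lo hi * outer_prod N Out lo hi)"
proof -
  have "transfer_prod (C \<union> Out) lo hi = transfer_prod C lo hi"
    using assms(2) by (intro transfer_prod_cong) auto
  moreover have "outer_prod N (C \<union> Out) lo hi = outer_prod N Out lo hi"
    using assms(1) by (intro outer_prod_cong) auto
  ultimately show ?thesis
    using assms(3,4) dimer_count_split[of lo hi N "C \<union> Out"] by simp
qed

definition touches :: "nat \<Rightarrow> nat \<Rightarrow> nat set \<Rightarrow> nat set \<Rightarrow> bool" where
  "touches a b J K \<longleftrightarrow> (J \<union> K) \<inter> {a..<b} \<noteq> {}"

text \<open>Strings missing \<open>[a, b)\<close> see only the transfer matrix \<open>M\<close> of \<open>[a, b)\<close> and the part \<open>Out\<close> of the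
  configuration outside \<open>[a, b)\<close>; local strings meeting \<open>[a, b)\<close> stay in the window
  \<open>[a - R, b + R)\<close> and see only its content \<open>C\<close> and the product \<open>Om\<close> of the transfer matrices
  outside it.\<close>

definition far_part :: "nat \<Rightarrow> (nat set \<Rightarrow> nat set \<Rightarrow> complex) \<Rightarrow> nat \<Rightarrow> nat \<Rightarrow> nat set \<Rightarrow> mat2 \<Rightarrow> complex" where
  "far_part N c a b Out M = (\<Sum>J\<in>Pow {..<N}. \<Sum>K\<in>Pow {..<N}.
     if \<not> touches a b J K \<and> admissible Out J K
     then c J K * trace (M * outer_prod N ((Out - J) \<union> K) a b) else 0)"

definition near_part :: "nat \<Rightarrow> (nat set \<Rightarrow> nat set \<Rightarrow> complex) \<Rightarrow> nat \<Rightarrow> nat \<Rightarrow> nat \<Rightarrow> nat set \<Rightarrow> mat2 \<Rightarrow> complex" where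
  "near_part N c a b R C Om = (\<Sum>J\<in>Pow {..<N}. \<Sum>K\<in>Pow {..<N}.
     if touches a b J K \<and> admissible C J K
     then c J K * trace (transfer_prod ((C - J) \<union> K) (a - R) (b + R) * Om) else 0)"

lemma far_part_add:
  "far_part N c a b Out (M1 + M2) = far_part N c a b Out M1 + far_part N c a b Out M2"
  unfolding far_part_def sum.distrib[symmetric]
  by (intro sum.cong refl) (simp add: distrib_left distrib_right trace_add)

lemma near_part_add:
  "near_part N c a b R C (Om1 + Om2) = near_part N c a b R C Om1 + near_part N c a b R C Om2"
  unfolding near_part_def sum.distrib[symmetric]
  by (intro sum.cong refl) (simp add: distrib_left distrib_right trace_add)

lemma cdist_less_imp_near:
  assumes "cdist N i j < R" "a \<le> i" "i < b" "R \<le> a" "b + R \<le> N" "j < N"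
  shows "a < j + R \<and> j + 1 < b + R"
proof (cases "i \<le> j")
  case True
  then have "nat \<bar>int i - int j\<bar> = j - i"
    by simp
  with assms True show ?thesis
    unfolding cdist_def by (auto simp: min_def split: if_splits)
next
  case False
  then have "nat \<bar>int i - int j\<bar> = i - j"
    by simp
  with assms False show ?thesis
    unfolding cdist_def by (auto simp: min_def split: if_splits)
qed

lemma local_string_in_window:
  assumes "local_range N k R c" "R \<le> a" "b + R \<le> N" "J \<subseteq> {..<N}" "K \<subseteq> {..<N}"
    and "c J K \<noteq> 0" "touches a b J K"
  shows "J \<union> K \<subseteq> {a + 1 - R..<b + R - 1}"
proof
  fix j
  assume j: "j \<in> J \<union> K"
  from \<open>touches a b J K\<close> obtain i where "i \<in> (J \<union> K) \<inter> {a..<b}"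
    unfolding touches_def by blast
  then have i: "i \<in> J \<union> K" "a \<le> i" "i < b"
    by auto
  have "cdist N i j < R"
    using assms(1,4-6) i(1) j unfolding local_range_def by (auto simp: atLeast0LessThan)
  moreover have "j < N"
    using j assms(4,5) by auto
  ultimately show "j \<in> {a + 1 - R..<b + R - 1}"
    using cdist_less_imp_near[OF _ i(2,3) assms(2,3)] by force
qed

lemma dimer_count_string_far:
  assumes "(J \<union> K) \<inter> {a..<b} = {}" "Out \<inter> {a..<b} = {}" "a \<le> b" "b \<le> N"
  shows "dimer_count N (((C \<union> Out) - J) \<union> K)
    = trace (transfer_prod C a b * outer_prod N ((((C - {a..<b}) \<union> Out) - J) \<union> K) a b)"
proof -
  have "transfer_prod (((C \<union> Out) - J) \<union> K) a b = transfer_prod C a b"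
    using assms(1,2) by (intro transfer_prod_cong) auto
  moreover have "outer_prod N (((C \<union> Out) - J) \<union> K) a b = outer_prod N ((((C - {a..<b}) \<union> Out) - J) \<union> K) a b"
    by (intro outer_prod_cong) auto
  ultimately show ?thesis
    using assms(3,4) dimer_count_split[of a b N] by simp
qed

lemma dimer_count_string_near:
  assumes "J \<union> K \<subseteq> {lo..<hi}" "C \<subseteq> {lo..<hi}" "Out \<inter> {lo..<hi} = {}" "lo \<le> hi" "hi \<le> N"
  shows "dimer_count N (((C \<union> Out) - J) \<union> K)
    = trace (transfer_prod ((C - J) \<union> K) lo hi * outer_prod N Out lo hi)"
proof -
  have "((C \<union> Out) - J) \<union> K = ((C - J) \<union> K) \<union> Out"
    using assms(1,3) by auto
  moreover have "(C - J) \<union> K \<subseteq> {lo..<hi}"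
    using assms(1,2) by auto
  ultimately show ?thesis
    using assms(3-5) by (simp add: dimer_count_window)
qed

lemma reduced_action_window:
  assumes lr: "local_range N k R c" and win: "R \<le> a" "a \<le> b" "b + R \<le> N"
    and C: "C \<subseteq> {a - R..<b + R}" and Out: "Out \<inter> {a - R..<b + R} = {}"
  shows "reduced_action N c (C \<union> Out)
    = far_part N c a b ((C - {a..<b}) \<union> Out) (transfer_prod C a b)
      + near_part N c a b R C (outer_prod N Out (a - R) (b + R))"
  unfolding reduced_action_def far_part_def near_part_def sum.distrib[symmetric]
proof (intro sum.cong refl)
  fix J K
  assume "J \<in> Pow {..<N}" "K \<in> Pow {..<N}"
  then have JK: "J \<subseteq> {..<N}" "K \<subseteq> {..<N}"
    by auto
  let ?V = "C \<union> Out" and ?I = "{a..<b}" and ?W = "{a - R..<b + R}"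
  have "?I \<subseteq> ?W" "{a + 1 - R..<b + R - 1} \<subseteq> ?W"
    by auto
  show "(if admissible ?V J K then c J K * dimer_count N ((?V - J) \<union> K) else 0)
    = (if \<not> touches a b J K \<and> admissible ((C - ?I) \<union> Out) J K
        then c J K * trace (transfer_prod C a b * outer_prod N ((((C - ?I) \<union> Out) - J) \<union> K) a b) else 0)
      + (if touches a b J K \<and> admissible C J K
        then c J K * trace (transfer_prod ((C - J) \<union> K) (a - R) (b + R) * outer_prod N Out (a - R) (b + R))
        else 0)"
  proof (cases "touches a b J K")
    case False
    then have "(J \<union> K) \<inter> ?I = {}"
      by (simp add: touches_def)
    moreover have "Out \<inter> ?I = {}"
      using Out \<open>?I \<subseteq> ?W\<close> by blast
    ultimately have "admissible ?V J K \<longleftrightarrow> admissible ((C - ?I) \<union> Out) J K"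
      unfolding admissible_def by blast
    with False show ?thesis
      using dimer_count_string_far[OF \<open>(J \<union> K) \<inter> ?I = {}\<close> \<open>Out \<inter> ?I = {}\<close>] win by simp
  next
    case True
    show ?thesis
    proof (cases "c J K = 0")
      case False
      then have "J \<union> K \<subseteq> ?W"
        using local_string_in_window[OF lr win(1,3) JK False True] \<open>{a + 1 - R..<b + R - 1} \<subseteq> ?W\<close> by blast
      then have "admissible ?V J K \<longleftrightarrow> admissible C J K"
        using C Out unfolding admissible_def by blast
      with True show ?thesis
        using dimer_count_string_near[OF \<open>J \<union> K \<subseteq> ?W\<close> C Out] win by simp
    qed simp
  qed
qed

lemma reduced_eigen_window:
  assumes lr: "local_range N k R c" and eig: "reduced_eigen N c E"
    and win: "R \<le> a" "a \<le> b" "b + R \<le> N"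
    and C: "C \<subseteq> {a - R..<b + R}"
    and Out: "Out \<subseteq> {..<N}" "Out \<inter> {a - R..<b + R} = {}" "card C + card Out = 2 * p"
  shows "E p * dimer_count N (C \<union> Out)
    = far_part N c a b ((C - {a..<b}) \<union> Out) (transfer_prod C a b)
      + near_part N c a b R C (outer_prod N Out (a - R) (b + R))"
proof -
  have "C \<subseteq> {..<N}"
    using C win by auto
  then have "finite C" "finite Out"
    using Out(1) by (simp_all add: finite_subset)
  then have "card (C \<union> Out) = 2 * p"
    using C Out(2,3) by (subst card_Un_disjoint) auto
  with reduced_eigenD[OF eig] \<open>C \<subseteq> {..<N}\<close> Out(1) show ?thesis
    using reduced_action_window[OF lr win C Out(2)] by simp
qed

text \<open>The far parts of the two configurations coincide and cancel.\<close>

lemma increment_pair: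
  assumes lr: "local_range N k R c" and eig: "reduced_eigen N c E"
    and win: "R \<le> a" "a \<le> b" "b + R \<le> N"
    and C: "C \<subseteq> {a - R..<b + R}" "C' \<subseteq> {a - R..<b + R}" "C' - {a..<b} = C - {a..<b}"
      "transfer_prod C' a b = transfer_prod C a b" "card C' = card C + 2"
    and Out: "Out \<subseteq> {..<N}" "Out \<inter> {a - R..<b + R} = {}" "card C + card Out = 2 * p"
  shows "(E (Suc p) - E p) * trace (transfer_prod C (a - R) (b + R) * outer_prod N Out (a - R) (b + R))
    = near_part N c a b R C' (outer_prod N Out (a - R) (b + R))
      - near_part N c a b R C (outer_prod N Out (a - R) (b + R))"
proof -
  let ?I = "{a..<b}" and ?Om = "outer_prod N Out (a - R) (b + R)"
  have "?I \<subseteq> {a - R..<b + R}"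
    by auto
  then have "Out \<inter> ?I = {}"
    using Out(2) by blast
  then have "transfer_prod (C' \<union> Out) a b = transfer_prod (C \<union> Out) a b"
    using C(4) by (simp add: transfer_prod_Un_disjoint)
  moreover have "outer_prod N (C' \<union> Out) a b = outer_prod N (C \<union> Out) a b"
    using C(3) by (intro outer_prod_eq) blast
  ultimately have same_count: "dimer_count N (C' \<union> Out) = dimer_count N (C \<union> Out)"
    using win dimer_count_split[of a b N] by simp
  have count: "dimer_count N (C \<union> Out) = trace (transfer_prod C (a - R) (b + R) * ?Om)"
    using win C(1) Out(2) by (intro dimer_count_window) auto
  have "E p * dimer_count N (C \<union> Out)
      = far_part N c a b ((C - ?I) \<union> Out) (transfer_prod C a b) + near_part N c a b R C ?Om"
    by (rule reduced_eigen_window[OF lr eig win C(1) Out])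
  moreover have "E (Suc p) * dimer_count N (C \<union> Out)
      = far_part N c a b ((C - ?I) \<union> Out) (transfer_prod C a b) + near_part N c a b R C' ?Om"
    using reduced_eigen_window[OF lr eig win C(2) Out(1,2), of "Suc p"] C(3-5) Out(3) same_count by simp
  ultimately show ?thesis
    unfolding count[symmetric] by (simp add: algebra_simps)
qed

lemma increment_split:
  assumes lr: "local_range N k R c" and eig: "reduced_eigen N c E"
    and win: "R \<le> a" "a \<le> b" "b + R \<le> N"
    and C: "C0 \<subseteq> {a - R..<b + R}" "C1 \<subseteq> {a - R..<b + R}" "C2 \<subseteq> {a - R..<b + R}"
      "C1 - {a..<b} = C0 - {a..<b}" "C2 - {a..<b} = C0 - {a..<b}"
      "transfer_prod C0 a b = transfer_prod C1 a b + transfer_prod C2 a b"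
      "card C0 = card C1 + 2" "card C2 = card C1"
    and Out: "Out \<subseteq> {..<N}" "Out \<inter> {a - R..<b + R} = {}" "card C1 + card Out = 2 * p"
  shows "(E (Suc p) - E p) * trace (transfer_prod C0 (a - R) (b + R) * outer_prod N Out (a - R) (b + R))
    = near_part N c a b R C0 (outer_prod N Out (a - R) (b + R))
      - near_part N c a b R C1 (outer_prod N Out (a - R) (b + R))
      - near_part N c a b R C2 (outer_prod N Out (a - R) (b + R))"
proof -
  let ?I = "{a..<b}" and ?Om = "outer_prod N Out (a - R) (b + R)"
  have "?I \<subseteq> {a - R..<b + R}"
    by auto
  then have "Out \<inter> ?I = {}"
    using Out(2) by blast
  moreover have "outer_prod N (C1 \<union> Out) a b = outer_prod N (C0 \<union> Out) a b"
    "outer_prod N (C2 \<union> Out) a b = outer_prod N (C0 \<union> Out) a b"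
    using C(4,5) by (intro outer_prod_eq; blast)+
  ultimately have sum_count:
    "dimer_count N (C0 \<union> Out) = dimer_count N (C1 \<union> Out) + dimer_count N (C2 \<union> Out)"
    using win C(6) dimer_count_split[of a b N]
    by (simp add: transfer_prod_Un_disjoint distrib_right trace_add)
  have count: "dimer_count N (C0 \<union> Out) = trace (transfer_prod C0 (a - R) (b + R) * ?Om)"
    using win C(1) Out(2) by (intro dimer_count_window) auto
  have "E (Suc p) * dimer_count N (C0 \<union> Out)
      = far_part N c a b ((C0 - ?I) \<union> Out) (transfer_prod C1 a b)
        + far_part N c a b ((C0 - ?I) \<union> Out) (transfer_prod C2 a b) + near_part N c a b R C0 ?Om"
    using reduced_eigen_window[OF lr eig win C(1) Out(1,2), of "Suc p"] C(6,7) Out(3)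
    by (simp add: far_part_add)
  moreover have "E p * dimer_count N (C1 \<union> Out)
      = far_part N c a b ((C0 - ?I) \<union> Out) (transfer_prod C1 a b) + near_part N c a b R C1 ?Om"
    using reduced_eigen_window[OF lr eig win C(2) Out] C(4) by simp
  moreover have "E p * dimer_count N (C2 \<union> Out)
      = far_part N c a b ((C0 - ?I) \<union> Out) (transfer_prod C2 a b) + near_part N c a b R C2 ?Om"
    using reduced_eigen_window[OF lr eig win C(3) Out(1,2)] C(5,8) Out(3) by simp
  ultimately show ?thesis
    unfolding count[symmetric] sum_count by (simp add: algebra_simps)
qed

section \<open>Increments of the eigenvalues\<close>

definition sparse_weight :: "nat \<Rightarrow> (nat set \<Rightarrow> nat set \<Rightarrow> complex) \<Rightarrow> nat \<Rightarrow> nat \<Rightarrow> nat \<Rightarrow> nat set \<Rightarrow> complex" where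
  "sparse_weight N c a b R C = (\<Sum>J\<in>Pow {..<N}. \<Sum>K\<in>Pow {..<N}.
     if touches a b J K \<and> admissible C J K
     then c J K * m00 (transfer_prod ((C - J) \<union> K) (Suc (a - R)) (b + R - 1)) else 0)"

text \<open>If the two end sites of the window stay empty, a local string acting near \<open>[a, b)\<close> sees
  only the entry of the outer product between uncrossed bonds.\<close>

lemma near_part_vacant_ends:
  assumes lr: "local_range N k R c" and "0 < R" "R \<le> a" "a \<le> b" "b + R \<le> N"
    and C: "C \<subseteq> {Suc (a - R)..<b + R - 1}"
  shows "near_part N c a b R C Om = sparse_weight N c a b R C * trace (proj0 * Om)"
  unfolding near_part_def sparse_weight_def sum_distrib_right
proof (intro sum.cong refl)
  fix J K
  assume "J \<in> Pow {..<N}" "K \<in> Pow {..<N}"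
  then have JK: "J \<subseteq> {..<N}" "K \<subseteq> {..<N}"
    by auto
  let ?S = "(C - J) \<union> K"
  show "(if touches a b J K \<and> admissible C J K
      then c J K * trace (transfer_prod ?S (a - R) (b + R) * Om) else 0)
    = (if touches a b J K \<and> admissible C J K
      then c J K * m00 (transfer_prod ?S (Suc (a - R)) (b + R - 1)) else 0) * trace (proj0 * Om)"
  proof (cases "touches a b J K \<and> c J K \<noteq> 0")
    case True
    then have "?S \<subseteq> {Suc (a - R)..<b + R - 1}"
      using local_string_in_window[OF lr assms(3,5) JK] C \<open>R \<le> a\<close> by fastforce
    then have ends: "a - R \<notin> ?S" "b + R - 1 \<notin> ?S"
      by auto
    have "transfer_prod ?S (a - R) (b + R)
        = transfer_prod ?S (a - R) (Suc (a - R)) * transfer_prod ?S (Suc (a - R)) (b + R - 1)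
          * transfer_prod ?S (b + R - 1) (b + R)"
      using assms(2-4) transfer_prod_split[of "a - R" "Suc (a - R)" "b + R" ?S]
        transfer_prod_split[of "Suc (a - R)" "b + R - 1" "b + R" ?S]
      by (simp add: mult.assoc)
    also have "transfer_prod ?S (a - R) (Suc (a - R)) = proj0"
      unfolding transfer_prod_single transfer_def using ends(1) by (rule if_not_P)
    also have "transfer_prod ?S (b + R - 1) (Suc (b + R - 1)) = proj0"
      unfolding transfer_prod_single transfer_def using ends(2) by (rule if_not_P)
    then have "transfer_prod ?S (b + R - 1) (b + R) = proj0"
      using \<open>0 < R\<close> by simp
    finally show ?thesis
      using True by (simp add: trace_proj0_sandwich)
  qed auto
qed

lemma transfer_prod_four:
  "transfer_prod S a (a + 4)
    = transfer (a \<in> S) * transfer (a + 1 \<in> S) * transfer (a + 2 \<in> S) * transfer (a + 3 \<in> S)"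
  by (simp add: transfer_prod_def numeral_eq_Suc mult.assoc)

lemma increment_sparse:
  assumes lr: "local_range N k R c" and eig: "reduced_eigen N c E"
    and R: "0 < R" "R \<le> a" "a + 4 + R \<le> N"
    and V: "V \<subseteq> {..<N}" "V \<inter> {a - R..<a + 4 + R} = {}" "card V = 2 * p" "dimer_count N V \<noteq> 0"
  shows "E (Suc p) - E p = sparse_weight N c a (a + 4) R {a + 1, a + 2} - sparse_weight N c a (a + 4) R {}"
proof -
  let ?Om = "outer_prod N V (a - R) (a + 4 + R)"
  let ?w = "\<lambda>C. sparse_weight N c a (a + 4) R C"
  have win: "R \<le> a" "a \<le> a + 4" "a + 4 + R \<le> N"
    using R by auto
  have lt: "a - R < a + 4 + R"
    by arith
  have "transfer_prod {a + 1, a + 2} a (a + 4) = transfer_prod {} a (a + 4)"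
    by (simp add: transfer_prod_four transfer_def mult.assoc)
  then have "(E (Suc p) - E p) * trace (transfer_prod {} (a - R) (a + 4 + R) * ?Om)
      = near_part N c a (a + 4) R {a + 1, a + 2} ?Om - near_part N c a (a + 4) R {} ?Om"
    using R V by (intro increment_pair[OF lr eig win]) auto
  moreover have empty_window: "transfer_prod {} (a - R) (a + 4 + R) = proj0"
    using lt by (simp add: transfer_prod_vacant)
  moreover have "near_part N c a (a + 4) R C ?Om = ?w C * trace (proj0 * ?Om)"
    if "C \<subseteq> {a + 1, a + 2}" for C
    using that R by (intro near_part_vacant_ends[OF lr]) auto
  moreover have "dimer_count N V = trace (proj0 * ?Om)"
    using dimer_count_window[of "{}" "a - R" "a + 4 + R" V N] V(2) R(3) lt empty_window by simp
  ultimately have "(E (Suc p) - E p) * dimer_count N V = (?w {a + 1, a + 2} - ?w {}) * dimer_count N V"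
    by (simp add: algebra_simps)
  with V(4) show ?thesis
    by simp
qed

definition low_increment :: "nat \<Rightarrow> (nat set \<Rightarrow> nat set \<Rightarrow> complex) \<Rightarrow> nat \<Rightarrow> complex" where
  "low_increment N c R = sparse_weight N c R (R + 4) R {R + 1, R + 2} - sparse_weight N c R (R + 4) R {}"

lemma increment_low:
  assumes lr: "local_range N k R c" and eig: "reduced_eigen N c E"
    and "0 < R" "2 * p + 2 * R + 4 \<le> N"
  shows "E (Suc p) - E p = low_increment N c R"
proof -
  let ?V = "{2 * R + 4..<2 * R + 4 + 2 * p}"
  have "dimer_count N ?V \<noteq> 0"
    using assms(4) by (intro dimer_count_block) simp
  then show ?thesis
    unfolding low_increment_def using assms
    by (intro increment_sparse[OF lr eig]) auto
qed

lemma outer_prod_interval: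
  assumes "s \<le> lo" "lo \<le> hi" "hi \<le> t" "t \<le> N"
  shows "outer_prod N ({s..<t} - {lo..<hi}) lo hi
    = sigma_x ^ (t - hi) * (if t < N then proj0 else 1) * ((if 0 < s then proj0 else 1) * sigma_x ^ (lo - s))"
proof -
  let ?S = "{s..<t} - {lo..<hi}"
  have "{hi..<t} \<subseteq> ?S" "?S \<inter> {t..<N} = {}" "{s..<lo} \<subseteq> ?S" "?S \<inter> {0..<s} = {}"
    using assms by auto
  note parts = transfer_prod_occupied[OF this(1)] transfer_prod_vacant[OF this(2)]
    transfer_prod_occupied[OF this(3)] transfer_prod_vacant[OF this(4)]
  have "transfer_prod ?S hi N = transfer_prod ?S hi t * transfer_prod ?S t N"
    using assms by (intro transfer_prod_split) auto
  also have "\<dots> = sigma_x ^ (t - hi) * (if t < N then proj0 else 1)"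
    by (simp only: parts)
  finally have right: "transfer_prod ?S hi N = sigma_x ^ (t - hi) * (if t < N then proj0 else 1)" .
  have "transfer_prod ?S 0 lo = transfer_prod ?S 0 s * transfer_prod ?S s lo"
    using assms by (intro transfer_prod_split) auto
  also have "\<dots> = (if 0 < s then proj0 else 1) * sigma_x ^ (lo - s)"
    by (simp only: parts)
  finally show ?thesis
    by (simp add: outer_prod_def right)
qed

text \<open>Compare the full outside, with outer product \<open>1 = proj0 + proj1\<close>, with two outsides that have
  outer products \<open>proj0\<close> and \<open>proj1\<close> and leave \<open>[0, s)\<close> empty, so that their increments are
  already known.\<close>

lemma increment_from_outer_decomposition:
  fixes M :: mat2 and \<Phi> :: "mat2 \<Rightarrow> complex"
  assumes law: "\<And>Out q. Out \<subseteq> {..<N} \<Longrightarrow> Out \<inter> {lo..<hi} = {} \<Longrightarrow> d + card Out = 2 * q \<Longrightarrow>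
      (E (Suc q) - E q) * trace (M * outer_prod N Out lo hi) = \<Phi> (outer_prod N Out lo hi)"
    and additive: "\<Phi> (proj0 + proj1) = \<Phi> proj0 + \<Phi> proj1"
    and low: "\<And>q. 2 * q + s \<le> N \<Longrightarrow> E (Suc q) - E q = \<omega>"
    and geom: "0 < s" "even s" "s + 2 \<le> lo" "even lo" "lo \<le> hi" "hi < N" "even (N - hi)"
    and M: "trace M \<noteq> 0"
    and p: "d + (N - (hi - lo)) = 2 * p" "2 * p \<le> N"
  shows "E (Suc p) - E p = \<omega>"
proof -
  have on_sparse: "\<Phi> (outer_prod N Out lo hi) = \<omega> * trace (M * outer_prod N Out lo hi)"
    if "Out \<subseteq> {..<N}" "Out \<inter> {lo..<hi} = {}" "d + card Out = 2 * q" "2 * q + s \<le> N" for Out q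
    using law[OF that(1-3)] low[OF that(4)] by simp
  let ?Out = "\<lambda>x y. {x..<y} - {lo..<hi}"
  have Out: "?Out x y \<subseteq> {..<N}" "?Out x y \<inter> {lo..<hi} = {}" "card (?Out x y) = (y - x) - (hi - lo)"
    if "x \<le> lo" "hi \<le> y" "y \<le> N" for x y
    using that by (auto simp: card_Diff_subset)
  obtain h where h: "s = 2 * h"
    using \<open>even s\<close> by blast
  have parity: "even (N - hi)" "odd (N - 1 - hi)" "even (lo - s)" "odd (lo - Suc s)"
    using geom by auto
  have "d + card (?Out s N) = 2 * (p - h)" "2 * (p - h) + s \<le> N"
    using Out(3)[of s N] geom p h by auto
  then have "\<Phi> proj0 = \<omega> * trace (M * proj0)"
    using on_sparse[OF Out(1,2)[of s N]] geom parity outer_prod_interval[of s lo hi N N]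
    by (simp add: sigma_x_power)
  moreover have "d + card (?Out (Suc s) (N - 1)) = 2 * (p - h - 1)" "2 * (p - h - 1) + s \<le> N"
    using Out(3)[of "Suc s" "N - 1"] geom p h by auto
  then have "\<Phi> proj1 = \<omega> * trace (M * proj1)"
    using on_sparse[OF Out(1,2)[of "Suc s" "N - 1"]] geom parity
      outer_prod_interval[of "Suc s" lo hi "N - 1" N]
    by (simp add: sigma_x_power sigma_x_proj0_proj0_sigma_x)
  moreover have "d + card (?Out 0 N) = 2 * p"
    using Out(3)[of 0 N] geom p by auto
  then have "(E (Suc p) - E p) * trace M = \<Phi> 1"
    using law[OF Out(1,2)[of 0 N]] geom parity outer_prod_interval[of 0 lo hi N N]
    by (simp add: sigma_x_power)
  moreover have "\<Phi> 1 = \<Phi> proj0 + \<Phi> proj1" "trace M = trace (M * proj0) + trace (M * proj1)"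
    using additive by (simp_all add: proj0_plus_proj1 flip: trace_add distrib_left)
  ultimately have "(E (Suc p) - E p) * trace M = \<omega> * trace M"
    by (simp add: distrib_left)
  with M show ?thesis
    by simp
qed

lemma transfer_prod_window_gap:
  assumes "lo \<le> x" "x \<le> u" "u < v" "v \<le> z" "z \<le> hi"
  shows "transfer_prod ({lo..<hi} - {u..<v}) x z = sigma_x ^ (u - x) * proj0 * sigma_x ^ (z - v)"
  using assms by (intro transfer_prod_gap) auto

text \<open>Shortening a gap of length \<open>g \<ge> 3\<close> by one dimer does not change the transfer matrix of the
  middle part of the window.\<close>

lemma increment_gap:
  assumes lr: "local_range N k R c" and eig: "reduced_eigen N c E" and "0 < R"
    and low: "\<And>q. 2 * q + (2 * R + 4) \<le> N \<Longrightarrow> E (Suc q) - E q = \<omega>"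
    and g: "3 \<le> g" "6 * R + 6 + g < N" "N - g = 2 * p"
  shows "E (Suc p) - E p = \<omega>"
proof -
  \<comment> \<open>The window \<open>[?lo, ?hi)\<close> around the gap \<open>[?y, ?y + g)\<close> keeps even distances to \<open>0\<close> and \<open>N\<close> and
    leaves room for the empty stretch \<open>[0, 2 * R + 4)\<close> of the known increments.\<close>
  let ?lo = "2 * R + 6" and ?hi = "6 * R + 6 + g" and ?y = "4 * R + 6"
  let ?a = "3 * R + 6" and ?b = "5 * R + 6 + g"
  define C where "C = {?lo..<?hi} - {?y..<?y + g}"
  define C' where "C' = {?lo..<?hi} - {?y..<?y + (g - 2)}"
  have win: "R \<le> ?a" "?a \<le> ?b" "?b + R \<le> N" and ends: "?a - R = ?lo" "?b + R = ?hi"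
    using g by auto
  have "transfer_prod C ?lo ?hi = proj0"
    unfolding C_def using g by (subst transfer_prod_window_gap) (auto simp: sigma_x_power)
  moreover have "transfer_prod C' ?a ?b = transfer_prod C ?a ?b"
    unfolding C_def C'_def using g by (simp add: transfer_prod_window_gap sigma_x_power)
  moreover have "card C = 4 * R" "card C' = card C + 2"
    unfolding C_def C'_def using g by (simp_all add: card_Diff_subset)
  moreover have "{?y..<?y + g} \<subseteq> {?a..<?b}" "{?y..<?y + (g - 2)} \<subseteq> {?a..<?b}"
    by auto
  then have "C' - {?a..<?b} = C - {?a..<?b}"
    unfolding C_def C'_def by blast
  moreover have "C \<subseteq> {?a - R..<?b + R}" "C' \<subseteq> {?a - R..<?b + R}"
    unfolding ends C_def C'_def by blast+
  ultimately have law: "(E (Suc q) - E q) * trace (proj0 * outer_prod N Out ?lo ?hi)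
      = near_part N c ?a ?b R C' (outer_prod N Out ?lo ?hi)
        - near_part N c ?a ?b R C (outer_prod N Out ?lo ?hi)"
    if "Out \<subseteq> {..<N}" "Out \<inter> {?lo..<?hi} = {}" "4 * R + card Out = 2 * q" for Out q
    using increment_pair[OF lr eig win, of C C' Out q] that unfolding ends by simp
  have "N - ?hi = 2 * (p - 3 * R - 3)"
    using g by arith
  show ?thesis
    by (rule increment_from_outer_decomposition[where M = proj0 and d = "4 * R" and s = "2 * R + 4"
          and lo = ?lo and hi = ?hi and \<Phi> = "\<lambda>Om. near_part N c ?a ?b R C' Om - near_part N c ?a ?b R C Om"])
      (fact law | use g \<open>N - ?hi = _\<close> in \<open>simp add: low near_part_add\<close>)+
qed

lemma sigma_x_power_proj0_sum:
  assumes "0 < n"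
  shows "sigma_x ^ n * proj0 * sigma_x ^ n + sigma_x ^ (n - 1) * proj0 * sigma_x ^ (n + 1) = 1"
proof (cases "even n")
  case True
  with assms have "odd (n - 1)" "odd (n + 1)"
    by auto
  with True show ?thesis
    by (simp add: sigma_x_power sigma_x_conj_proj0 proj0_plus_proj1)
next
  case False
  then have "even (n - 1)" "even (n + 1)"
    by auto
  with False show ?thesis
    by (simp add: sigma_x_power sigma_x_conj_proj0 add.commute[of proj1] proj0_plus_proj1)
qed

text \<open>A full window has no gap to shorten; instead the transfer matrix \<open>1 = proj0 + proj1\<close> of its
  middle part is split.\<close>

lemma transfer_prod_remove_central_dimer:
  assumes "0 < R" "lo + R \<le> y" "y + 2 + R \<le> hi"
  shows "transfer_prod {lo..<hi} (y - R) (y + 2 + R)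
    = transfer_prod ({lo..<hi} - {y..<y + 2}) (y - R) (y + 2 + R)
      + transfer_prod ({lo..<hi} - {y - 1..<y + 1}) (y - R) (y + 2 + R)"
proof -
  have "transfer_prod ({lo..<hi} - {y..<y + 2}) (y - R) (y + 2 + R)
      + transfer_prod ({lo..<hi} - {y - 1..<y + 1}) (y - R) (y + 2 + R)
      = sigma_x ^ R * proj0 * sigma_x ^ R + sigma_x ^ (R - 1) * proj0 * sigma_x ^ (R + 1)"
    using assms by (simp add: transfer_prod_window_gap)
  also have "\<dots> = 1"
    using \<open>0 < R\<close> by (rule sigma_x_power_proj0_sum)
  also have "\<dots> = sigma_x ^ (y + 2 + R - (y - R))"
    using assms by (simp add: sigma_x_power)
  also have "\<dots> = transfer_prod {lo..<hi} (y - R) (y + 2 + R)"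
    using assms by (intro transfer_prod_occupied[symmetric]) auto
  finally show ?thesis ..
qed

lemma increment_full:
  assumes lr: "local_range N k R c" and eig: "reduced_eigen N c E" and "0 < R"
    and low: "\<And>q. 2 * q + (2 * R + 4) \<le> N \<Longrightarrow> E (Suc q) - E q = \<omega>"
    and N: "6 * R + 8 < N" "N = 2 * p + 2"
  shows "E (Suc p) - E p = \<omega>"
proof -
  let ?lo = "2 * R + 6" and ?hi = "6 * R + 8" and ?y = "4 * R + 6"
  let ?a = "3 * R + 6" and ?b = "5 * R + 8"
  define C0 where "C0 = {?lo..<?hi}"
  define C1 where "C1 = {?lo..<?hi} - {?y..<?y + 2}"
  define C2 where "C2 = {?lo..<?hi} - {?y - 1..<?y + 1}"
  have win: "R \<le> ?a" "?a \<le> ?b" "?b + R \<le> N" and ends: "?a - R = ?lo" "?b + R = ?hi"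
    using N by auto
  have "transfer_prod C0 ?lo ?hi = 1"
    unfolding C0_def by (simp add: transfer_prod_occupied sigma_x_power)
  moreover have "transfer_prod C0 ?a ?b = transfer_prod C1 ?a ?b + transfer_prod C2 ?a ?b"
    unfolding C0_def C1_def C2_def using transfer_prod_remove_central_dimer[OF \<open>0 < R\<close>, of ?lo ?y ?hi]
    by simp
  moreover have "{?y..<?y + 2} \<subseteq> {?lo..<?hi}" "{?y - 1..<?y + 1} \<subseteq> {?lo..<?hi}"
    using \<open>0 < R\<close> by auto
  then have "card C0 = card C1 + 2" "card C1 = 4 * R" "card C2 = card C1"
    unfolding C0_def C1_def C2_def using \<open>0 < R\<close> by (simp_all add: card_Diff_subset)
  moreover have "{?y..<?y + 2} \<subseteq> {?a..<?b}" "{?y - 1..<?y + 1} \<subseteq> {?a..<?b}"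
    using \<open>0 < R\<close> by auto
  then have "C1 - {?a..<?b} = C0 - {?a..<?b}" "C2 - {?a..<?b} = C0 - {?a..<?b}"
    unfolding C0_def C1_def C2_def by blast+
  moreover have "C0 \<subseteq> {?a - R..<?b + R}" "C1 \<subseteq> {?a - R..<?b + R}" "C2 \<subseteq> {?a - R..<?b + R}"
    unfolding ends C0_def C1_def C2_def by blast+
  ultimately have law: "(E (Suc q) - E q) * trace (1 * outer_prod N Out ?lo ?hi)
      = near_part N c ?a ?b R C0 (outer_prod N Out ?lo ?hi)
        - near_part N c ?a ?b R C1 (outer_prod N Out ?lo ?hi)
        - near_part N c ?a ?b R C2 (outer_prod N Out ?lo ?hi)"
    if "Out \<subseteq> {..<N}" "Out \<inter> {?lo..<?hi} = {}" "4 * R + card Out = 2 * q" for Out q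
    using increment_split[OF lr eig win, of C0 C1 C2 Out q] that unfolding ends by simp
  have "N - ?hi = 2 * (p - 3 * R - 3)"
    using N by arith
  show ?thesis
    by (rule increment_from_outer_decomposition[where M = 1 and d = "4 * R" and s = "2 * R + 4"
          and lo = ?lo and hi = ?hi
          and \<Phi> = "\<lambda>Om. near_part N c ?a ?b R C0 Om - near_part N c ?a ?b R C1 Om
            - near_part N c ?a ?b R C2 Om"])
      (fact law | use N \<open>N - ?hi = _\<close> in \<open>simp add: low near_part_add\<close>)+
qed

lemma increment_constant:
  assumes lr: "local_range N k R c" and eig: "reduced_eigen N c E"
    and "0 < R" "8 * R + 9 < N" "2 * p + 2 \<le> N"
  shows "E (Suc p) - E p = low_increment N c R"
proof -
  have low: "E (Suc q) - E q = low_increment N c R" if "2 * q + (2 * R + 4) \<le> N" for q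
    using that increment_low[OF lr eig \<open>0 < R\<close>] by simp
  consider "2 * p + (2 * R + 4) \<le> N" | "N = 2 * p + 2" | "3 \<le> N - 2 * p" "N - 2 * p \<le> 2 * R + 3"
    using assms(5) by linarith
  then show ?thesis
  proof cases
    case 1
    then show ?thesis
      by (rule low)
  next
    case 2
    have "6 * R + 8 < N"
      using assms(4) by linarith
    from increment_full[OF lr eig \<open>0 < R\<close> low this 2] show ?thesis .
  next
    case 3
    moreover have "6 * R + 6 + (N - 2 * p) < N" "N - (N - 2 * p) = 2 * p"
      using 3 assms(4,5) by linarith+
    ultimately show ?thesis
      by (intro increment_gap[OF lr eig \<open>0 < R\<close> low])
  qed
qed

lemma eigenvalues_linear:
  assumes lr: "local_range N k R c" and eig: "reduced_eigen N c E"
    and "0 < R" "8 * R + 9 < N" "2 * p \<le> N"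
  shows "E p = E 0 + low_increment N c R * of_nat p"
  using assms(5)
proof (induction p)
  case (Suc p)
  then have "E p = E 0 + low_increment N c R * of_nat p" "2 * p + 2 \<le> N"
    by simp_all
  moreover have "E (Suc p) - E p = low_increment N c R"
    using increment_constant[OF lr eig assms(3,4) \<open>2 * p + 2 \<le> N\<close>] .
  ultimately show ?case
    by (simp add: algebra_simps)
qed simp

theorem corollary1:
  fixes k R :: nat
  assumes "0 < k" and "0 < R"
  shows "\<exists>N0::nat. \<forall>N > N0. \<forall>(c :: nat set \<Rightarrow> nat set \<Rightarrow> complex) (E :: nat \<Rightarrow> complex).
           local_range N k R c \<and>
           (\<forall>p \<le> Lmax N. op_of N c (Qst N p) = (\<lambda>T. E p * Qst N p T))
           \<longrightarrow> (\<exists>\<Omega> \<omega> :: complex. \<forall>p \<le> Lmax N. E p = \<Omega> + \<omega> * of_nat p)"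
proof (intro exI[of _ "8 * R + 9"] allI impI, elim conjE)
  fix N :: nat and c :: "nat set \<Rightarrow> nat set \<Rightarrow> complex" and E :: "nat \<Rightarrow> complex"
  assume N: "8 * R + 9 < N" and lr: "local_range N k R c"
    and eigen: "\<forall>p \<le> Lmax N. op_of N c (Qst N p) = (\<lambda>T. E p * Qst N p T)"
  have "2 \<le> N"
    using N by simp
  then have eig: "reduced_eigen N c E"
    using eigen by (rule reduced_eigenI)
  show "\<exists>\<Omega> \<omega>. \<forall>p \<le> Lmax N. E p = \<Omega> + \<omega> * of_nat p"
  proof (intro exI allI impI)
    fix p
    assume "p \<le> Lmax N"
    then have "2 * p \<le> N"
      using Lmax_eq[OF \<open>2 \<le> N\<close>] by simp
    then show "E p = E 0 + low_increment N c R * of_nat p"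
      using eigenvalues_linear[OF lr eig \<open>0 < R\<close> N] by blast
  qed
qed

end
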